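(* Let $\mathcal E$ be an exact category and $\Phi:\operatorname{Serre}(\mathcal E)\to\operatorname{MSpec}\mathsf M(\mathcal E)$, $\Phi(\mathcal S)=\mathsf M(\mathcal E)\setminus\mathsf M_{\mathcal S}$ where $\mathsf M_{\mathcal S}=\{[X]\mid X\in\mathcal S\}$. Then: (1) $\Phi$ is a homeomorphism for the Zariski topologies; (2) the sets $U_X=\{\mathcal S\in\operatorname{Serre}(\mathcal E)\mid X\in\mathcal S\}$, $X\in\mathcal E$, form an open basis of $\operatorname{Serre}(\mathcal E)$; (3) for $\mathcal S,\mathcal T\in\operatorname{Serre}(\mathcal E)$, $\mathcal S$ lies in the closure of $\{\mathcal T\}$ if and only if $\mathcal S\subseteq\mathcal T$, i.e. the specialization order on $\operatorname{Serre}(\mathcal E)$ is inclusion.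
   Context: An exact category $\mathcal E$ is an additive full subcategory of an abelian category closed under extensions; conflations are short exact sequences with all terms in $\mathcal E$. The Grothendieck monoid $\mathsf M(\mathcal E)$ is the commutative monoid with a map $X\mapsto[X]$ on isomorphism classes with $[0]=0$ and $[Y]=[X]+[Z]$ for each conflation $0\to X\to Y\to Z\to 0$, universal among such maps. A Serre subcategory is a full additive subcategory $\mathcal S$ closed under isomorphisms such that for each conflation, $Y\in\mathcal S$ iff $X,Z\in\mathcal S$. A prime ideal of a monoid $M$ is a subset $\mathfrak p\ne M$ with $x+a\in\mathfrak p$ for $x\in\mathfrak p$, $a\in M$, and $x+y\in\mathfrak p\Rightarrow x\in\mathfrak p$ or $y\in\mathfrak p$. Zariski topology on $\operatorname{MSpec}M$: closed sets $V(S)=\{\mathfrak p\mid\mathfrak p\supseteq S\}$, $S\subseteq M$. Zariski topology on $\operatorname{Serre}(\mathcal E)$: closed sets $V(\mathcal X)=\{\mathcal S\mid\mathcal S\cap\mathcal X=\emptyset\}$ for subcategories (classes of objects closed under isomorphism) $\mathcal X\subseteq\mathcal E$. *)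

theory Defs
  imports "HOL-Analysis.Analysis" "HOL-Library.Multiset"
begin

record ('o, 'a) cat =
  Obj  :: "'o set"
  Arr  :: "'a set"
  Dom  :: "'a \<Rightarrow> 'o"
  Cod  :: "'a \<Rightarrow> 'o"
  Comp :: "'a \<Rightarrow> 'a \<Rightarrow> 'a"   (* Comp C g f = g \<circ> f *)
  Idm  :: "'o \<Rightarrow> 'a"

definition hom :: "('o,'a) cat \<Rightarrow> 'o \<Rightarrow> 'o \<Rightarrow> 'a set" where
  "hom C X Y = {f \<in> Arr C. Dom C f = X \<and> Cod C f = Y}"

definition is_category :: "('o,'a) cat \<Rightarrow> bool" where
  "is_category C \<longleftrightarrow>
     (\<forall>f\<in>Arr C. Dom C f \<in> Obj C \<and> Cod C f \<in> Obj C) \<and>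
     (\<forall>X\<in>Obj C. Idm C X \<in> hom C X X) \<and>
     (\<forall>f\<in>Arr C. \<forall>g\<in>Arr C. Cod C f = Dom C g \<longrightarrow> Comp C g f \<in> hom C (Dom C f) (Cod C g)) \<and>
     (\<forall>f\<in>Arr C. Comp C (Idm C (Cod C f)) f = f \<and> Comp C f (Idm C (Dom C f)) = f) \<and>
     (\<forall>f\<in>Arr C. \<forall>g\<in>Arr C. \<forall>h\<in>Arr C. Cod C f = Dom C g \<and> Cod C g = Dom C h \<longrightarrow>
        Comp C h (Comp C g f) = Comp C (Comp C h g) f)"

definition is_mono :: "('o,'a) cat \<Rightarrow> 'a \<Rightarrow> bool" where
  "is_mono C f \<longleftrightarrow> f \<in> Arr C \<and>
     (\<forall>g\<in>Arr C. \<forall>h\<in>Arr C. Cod C g = Dom C f \<and> Cod C h = Dom C f \<and> Dom C g = Dom C h \<and>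
        Comp C f g = Comp C f h \<longrightarrow> g = h)"

definition is_epi :: "('o,'a) cat \<Rightarrow> 'a \<Rightarrow> bool" where
  "is_epi C f \<longleftrightarrow> f \<in> Arr C \<and>
     (\<forall>g\<in>Arr C. \<forall>h\<in>Arr C. Dom C g = Cod C f \<and> Dom C h = Cod C f \<and> Cod C g = Cod C h \<and>
        Comp C g f = Comp C h f \<longrightarrow> g = h)"

definition is_iso :: "('o,'a) cat \<Rightarrow> 'a \<Rightarrow> bool" where
  "is_iso C f \<longleftrightarrow> f \<in> Arr C \<and> (\<exists>g \<in> hom C (Cod C f) (Dom C f).
      Comp C g f = Idm C (Dom C f) \<and> Comp C f g = Idm C (Cod C f))"

definition isomorphic :: "('o,'a) cat \<Rightarrow> 'o \<Rightarrow> 'o \<Rightarrow> bool" where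
  "isomorphic C X Y \<longleftrightarrow> (\<exists>f \<in> hom C X Y. is_iso C f)"

definition zero_obj :: "('o,'a) cat \<Rightarrow> 'o \<Rightarrow> bool" where
  "zero_obj C Z \<longleftrightarrow> Z \<in> Obj C \<and>
     (\<forall>X\<in>Obj C. (\<exists>!f. f \<in> hom C Z X) \<and> (\<exists>!f. f \<in> hom C X Z))"

definition zero_arr :: "('o,'a) cat \<Rightarrow> 'a \<Rightarrow> bool" where
  "zero_arr C f \<longleftrightarrow> f \<in> Arr C \<and> (\<exists>Z. zero_obj C Z \<and>
     (\<exists>g \<in> hom C (Dom C f) Z. \<exists>h \<in> hom C Z (Cod C f). f = Comp C h g))"

definition is_kernel :: "('o,'a) cat \<Rightarrow> 'a \<Rightarrow> 'a \<Rightarrow> bool" where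
  "is_kernel C k f \<longleftrightarrow> k \<in> Arr C \<and> f \<in> Arr C \<and> Cod C k = Dom C f \<and>
     zero_arr C (Comp C f k) \<and>
     (\<forall>g\<in>Arr C. Cod C g = Dom C f \<and> zero_arr C (Comp C f g) \<longrightarrow>
        (\<exists>!u. u \<in> hom C (Dom C g) (Dom C k) \<and> Comp C k u = g))"

definition is_cokernel :: "('o,'a) cat \<Rightarrow> 'a \<Rightarrow> 'a \<Rightarrow> bool" where
  "is_cokernel C c f \<longleftrightarrow> c \<in> Arr C \<and> f \<in> Arr C \<and> Dom C c = Cod C f \<and>
     zero_arr C (Comp C c f) \<and>
     (\<forall>g\<in>Arr C. Dom C g = Cod C f \<and> zero_arr C (Comp C g f) \<longrightarrow>
        (\<exists>!u. u \<in> hom C (Cod C c) (Cod C g) \<and> Comp C u c = g))"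

definition is_product :: "('o,'a) cat \<Rightarrow> 'o \<Rightarrow> 'o \<Rightarrow> 'o \<Rightarrow> 'a \<Rightarrow> 'a \<Rightarrow> bool" where
  "is_product C X Y P p1 p2 \<longleftrightarrow> p1 \<in> hom C P X \<and> p2 \<in> hom C P Y \<and>
     (\<forall>W\<in>Obj C. \<forall>f\<in>hom C W X. \<forall>g\<in>hom C W Y.
        (\<exists>!u. u \<in> hom C W P \<and> Comp C p1 u = f \<and> Comp C p2 u = g))"

definition is_coproduct :: "('o,'a) cat \<Rightarrow> 'o \<Rightarrow> 'o \<Rightarrow> 'o \<Rightarrow> 'a \<Rightarrow> 'a \<Rightarrow> bool" where
  "is_coproduct C X Y P i1 i2 \<longleftrightarrow> i1 \<in> hom C X P \<and> i2 \<in> hom C Y P \<and>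
     (\<forall>W\<in>Obj C. \<forall>f\<in>hom C X W. \<forall>g\<in>hom C Y W.
        (\<exists>!u. u \<in> hom C P W \<and> Comp C u i1 = f \<and> Comp C u i2 = g))"

text \<open>Abelian category (Freyd's definition, no additive structure assumed a priori):
  zero object, binary products and coproducts, kernels and cokernels,
  every mono is a kernel and every epi is a cokernel.\<close>
definition abelian :: "('o,'a) cat \<Rightarrow> bool" where
  "abelian C \<longleftrightarrow> is_category C \<and> (\<exists>Z. zero_obj C Z) \<and>
     (\<forall>X\<in>Obj C. \<forall>Y\<in>Obj C. \<exists>P p1 p2. is_product C X Y P p1 p2) \<and>
     (\<forall>X\<in>Obj C. \<forall>Y\<in>Obj C. \<exists>P i1 i2. is_coproduct C X Y P i1 i2) \<and>
     (\<forall>f\<in>Arr C. \<exists>k. is_kernel C k f) \<and>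
     (\<forall>f\<in>Arr C. \<exists>c. is_cokernel C c f) \<and>
     (\<forall>f. is_mono C f \<longrightarrow> (\<exists>g. is_kernel C f g)) \<and>
     (\<forall>f. is_epi C f \<longrightarrow> (\<exists>g. is_cokernel C f g))"

definition short_exact :: "('o,'a) cat \<Rightarrow> 'o \<Rightarrow> 'o \<Rightarrow> 'o \<Rightarrow> bool" where
  "short_exact C X Y Z \<longleftrightarrow> (\<exists>f \<in> hom C X Y. \<exists>g \<in> hom C Y Z.
      is_kernel C f g \<and> is_cokernel C g f)"

text \<open>E (a class of objects of the abelian category C, viewed as a full subcategory) is
  an additive full subcategory closed under extensions.\<close>
definition exact_cat :: "('o,'a) cat \<Rightarrow> 'o set \<Rightarrow> bool" where
  "exact_cat C E \<longleftrightarrow> abelian C \<and> E \<subseteq> Obj C \<and>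
     (\<exists>Z\<in>E. zero_obj C Z) \<and>
     (\<forall>X\<in>E. \<forall>Y\<in>E. \<exists>P\<in>E. \<exists>p1 p2. is_product C X Y P p1 p2) \<and>
     (\<forall>X Y Z. short_exact C X Y Z \<and> X \<in> E \<and> Z \<in> E \<longrightarrow> Y \<in> E)"

definition conflation :: "('o,'a) cat \<Rightarrow> 'o set \<Rightarrow> 'o \<Rightarrow> 'o \<Rightarrow> 'o \<Rightarrow> bool" where
  "conflation C E X Y Z \<longleftrightarrow> X \<in> E \<and> Y \<in> E \<and> Z \<in> E \<and> short_exact C X Y Z"

definition serre :: "('o,'a) cat \<Rightarrow> 'o set \<Rightarrow> 'o set \<Rightarrow> bool" where
  "serre C E S \<longleftrightarrow> S \<subseteq> E \<and>
     (\<forall>X\<in>S. \<forall>Y\<in>E. isomorphic C X Y \<longrightarrow> Y \<in> S) \<and>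
     (\<exists>Z\<in>S. zero_obj C Z) \<and>
     (\<forall>X\<in>S. \<forall>Y\<in>S. \<forall>P\<in>E. (\<exists>p1 p2. is_product C X Y P p1 p2) \<longrightarrow> P \<in> S) \<and>
     (\<forall>X Y Z. conflation C E X Y Z \<longrightarrow> (Y \<in> S \<longleftrightarrow> X \<in> S \<and> Z \<in> S))"

definition Serre :: "('o,'a) cat \<Rightarrow> 'o set \<Rightarrow> 'o set set" where
  "Serre C E = {S. serre C E S}"

definition iso_closed :: "('o,'a) cat \<Rightarrow> 'o set \<Rightarrow> 'o set \<Rightarrow> bool" where
  "iso_closed C E X \<longleftrightarrow> X \<subseteq> E \<and> (\<forall>A\<in>X. \<forall>B\<in>E. isomorphic C A B \<longrightarrow> B \<in> X)"

definition serre_V :: "('o,'a) cat \<Rightarrow> 'o set \<Rightarrow> 'o set \<Rightarrow> 'o set set" where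
  "serre_V C E X = {S \<in> Serre C E. S \<inter> X = {}}"

definition serre_zariski :: "('o,'a) cat \<Rightarrow> 'o set \<Rightarrow> 'o set topology" where
  "serre_zariski C E = topology (\<lambda>U. \<exists>X. iso_closed C E X \<and> U = Serre C E - serre_V C E X)"

definition U_obj :: "('o,'a) cat \<Rightarrow> 'o set \<Rightarrow> 'o \<Rightarrow> 'o set set" where
  "U_obj C E X = {S \<in> Serre C E. X \<in> S}"

text \<open>M(E) is presented as finite formal sums (multisets) of objects of E modulo the
  smallest congruence identifying isomorphic objects, [0] = 0 for zero objects and
  [Y] = [X] + [Z] for conflations.\<close>
inductive groth_rel :: "('o,'a) cat \<Rightarrow> 'o set \<Rightarrow> 'o multiset \<Rightarrow> 'o multiset \<Rightarrow> bool"
  for C E where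
  gr_refl:  "set_mset A \<subseteq> E \<Longrightarrow> groth_rel C E A A"
| gr_sym:   "groth_rel C E A B \<Longrightarrow> groth_rel C E B A"
| gr_trans: "groth_rel C E A B \<Longrightarrow> groth_rel C E B D \<Longrightarrow> groth_rel C E A D"
| gr_add:   "groth_rel C E A B \<Longrightarrow> set_mset D \<subseteq> E \<Longrightarrow> groth_rel C E (A + D) (B + D)"
| gr_iso:   "X \<in> E \<Longrightarrow> Y \<in> E \<Longrightarrow> isomorphic C X Y \<Longrightarrow> groth_rel C E {#X#} {#Y#}"
| gr_zero:  "Z \<in> E \<Longrightarrow> zero_obj C Z \<Longrightarrow> groth_rel C E {#Z#} {#}"
| gr_conf:  "conflation C E X Y Z \<Longrightarrow> groth_rel C E {#Y#} {#X, Z#}"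

definition groth_class :: "('o,'a) cat \<Rightarrow> 'o set \<Rightarrow> 'o multiset \<Rightarrow> 'o multiset set" where
  "groth_class C E A = {B. groth_rel C E A B}"

definition GM :: "('o,'a) cat \<Rightarrow> 'o set \<Rightarrow> 'o multiset set set" where
  "GM C E = groth_class C E ` {A. set_mset A \<subseteq> E}"

definition GM_add :: "('o,'a) cat \<Rightarrow> 'o set \<Rightarrow> 'o multiset set \<Rightarrow> 'o multiset set \<Rightarrow> 'o multiset set" where
  "GM_add C E a b = {D. \<exists>A\<in>a. \<exists>B\<in>b. groth_rel C E (A + B) D}"

definition gcls :: "('o,'a) cat \<Rightarrow> 'o set \<Rightarrow> 'o \<Rightarrow> 'o multiset set" where
  "gcls C E X = groth_class C E {#X#}"

definition prime_ideal :: "'m set \<Rightarrow> ('m \<Rightarrow> 'm \<Rightarrow> 'm) \<Rightarrow> 'm set \<Rightarrow> bool" where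
  "prime_ideal M add p \<longleftrightarrow> p \<subseteq> M \<and> p \<noteq> M \<and>
     (\<forall>x\<in>p. \<forall>a\<in>M. add x a \<in> p) \<and>
     (\<forall>x\<in>M. \<forall>y\<in>M. add x y \<in> p \<longrightarrow> x \<in> p \<or> y \<in> p)"

definition MSpec :: "'m set \<Rightarrow> ('m \<Rightarrow> 'm \<Rightarrow> 'm) \<Rightarrow> 'm set set" where
  "MSpec M add = {p. prime_ideal M add p}"

definition mspec_V :: "'m set \<Rightarrow> ('m \<Rightarrow> 'm \<Rightarrow> 'm) \<Rightarrow> 'm set \<Rightarrow> 'm set set" where
  "mspec_V M add S = {p \<in> MSpec M add. S \<subseteq> p}"

definition mspec_zariski :: "'m set \<Rightarrow> ('m \<Rightarrow> 'm \<Rightarrow> 'm) \<Rightarrow> 'm set topology" where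
  "mspec_zariski M add = topology (\<lambda>U. \<exists>S \<subseteq> M. U = MSpec M add - mspec_V M add S)"

definition Phi :: "('o,'a) cat \<Rightarrow> 'o set \<Rightarrow> 'o set \<Rightarrow> 'o multiset set set" where
  "Phi C E S = GM C E - gcls C E ` S"

end

theory Submission
  imports Defs
begin

text \<open>
  Membership of an object X in a Serre subcategory S depends only on the class [X] in M(E): the
  defining relations of M(E) (isomorphisms, zero objects, conflations) are exactly the closure
  properties of S, and every element of M(E) is the class of a single object, because the split
  conflation X \<rightarrow> X \<oplus> Y \<rightarrow> Y gives [X \<oplus> Y] = [X] + [Y].  Hence S is recovered
  from M(E) - \<Phi>(S), \<Phi>(S) is a prime ideal, and every prime p is \<Phi> of the Serre subcategory
  {X | [X] \<notin> p}.  For a class W of objects, the open set {S | S \<inter> W \<noteq> {}} of Serre(E) is the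
  preimage under \<Phi> of the basic open set of MSpec M(E) defined by the classes of W, so the topology
  of Serre(E) is the pullback of the Zariski topology along the bijection \<Phi>, which makes \<Phi> a
  homeomorphism.  The opens are the unions of the U_X, and S lies in the closure of T iff every
  U_X containing S contains T, i.e. iff S \<subseteq> T.
\<close>

section \<open>Zero morphisms and binary products\<close>

lemma isomorphic_sym: "isomorphic C X Y \<Longrightarrow> isomorphic C Y X"
  unfolding isomorphic_def is_iso_def hom_def by auto

context
  fixes C :: "('o,'a) cat"
  assumes cat: "is_category C"
begin

lemma cat_dom_cod_obj: "f \<in> Arr C \<Longrightarrow> Dom C f \<in> Obj C \<and> Cod C f \<in> Obj C"
  using cat unfolding is_category_def by blast

lemma cat_idm_hom: "X \<in> Obj C \<Longrightarrow> Idm C X \<in> hom C X X"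
  using cat unfolding is_category_def by blast

lemma cat_comp_hom: "f \<in> hom C X Y \<Longrightarrow> g \<in> hom C Y Z \<Longrightarrow> Comp C g f \<in> hom C X Z"
  using cat unfolding is_category_def hom_def by auto

lemma cat_idm_left: "f \<in> hom C X Y \<Longrightarrow> Comp C (Idm C Y) f = f"
  using cat unfolding is_category_def hom_def by auto

lemma cat_idm_right: "f \<in> hom C X Y \<Longrightarrow> Comp C f (Idm C X) = f"
  using cat unfolding is_category_def hom_def by auto

lemma cat_comp_assoc:
  "f \<in> hom C W X \<Longrightarrow> g \<in> hom C X Y \<Longrightarrow> h \<in> hom C Y Z \<Longrightarrow>
   Comp C h (Comp C g f) = Comp C (Comp C h g) f"
  using cat unfolding is_category_def hom_def by auto

lemma zero_obj_hom_unique: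
  assumes "zero_obj C Z" and "X \<in> Obj C"
  shows "f \<in> hom C Z X \<Longrightarrow> g \<in> hom C Z X \<Longrightarrow> f = g"
    and "f \<in> hom C X Z \<Longrightarrow> g \<in> hom C X Z \<Longrightarrow> f = g"
  using assms unfolding zero_obj_def by blast+

lemma zero_obj_hom_ex:
  assumes "zero_obj C Z" and "X \<in> Obj C"
  obtains f g where "f \<in> hom C Z X" and "g \<in> hom C X Z"
  using assms unfolding zero_obj_def by blast

lemma zero_obj_obj: "zero_obj C Z \<Longrightarrow> Z \<in> Obj C"
  unfolding zero_obj_def by blast

lemma zero_arr_unique:
  assumes f: "zero_arr C f" "f \<in> hom C X Y" and g: "zero_arr C g" "g \<in> hom C X Y"
  shows "f = g"
proof -
  obtain Z1 g1 h1 where Z1: "zero_obj C Z1" and g1: "g1 \<in> hom C X Z1" and h1: "h1 \<in> hom C Z1 Y"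
    and f_eq: "f = Comp C h1 g1"
    using f unfolding zero_arr_def hom_def by blast
  obtain Z2 g2 h2 where Z2: "zero_obj C Z2" and g2: "g2 \<in> hom C X Z2" and h2: "h2 \<in> hom C Z2 Y"
    and g_eq: "g = Comp C h2 g2"
    using g unfolding zero_arr_def hom_def by blast
  have XY: "X \<in> Obj C" "Y \<in> Obj C"
    using f(2) cat_dom_cod_obj unfolding hom_def by auto
  obtain i where i: "i \<in> hom C Z1 Z2"
    using zero_obj_hom_ex[OF Z1 zero_obj_obj[OF Z2]] by blast
  have "Comp C h2 i = h1"
    using zero_obj_hom_unique(1)[OF Z1 XY(2) cat_comp_hom[OF i h2] h1] .
  moreover have "Comp C i g1 = g2"
    using zero_obj_hom_unique(2)[OF Z2 XY(1) cat_comp_hom[OF g1 i] g2] .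
  ultimately show ?thesis
    using f_eq g_eq cat_comp_assoc[OF g1 i h2] by simp
qed

lemma zero_arr_comp_right:
  assumes f: "zero_arr C f" "f \<in> hom C X Y" and g: "g \<in> hom C W X"
  shows "zero_arr C (Comp C f g)"
proof -
  obtain Z k h where Z: "zero_obj C Z" and k: "k \<in> hom C X Z" and h: "h \<in> hom C Z Y"
    and f_eq: "f = Comp C h k"
    using f unfolding zero_arr_def hom_def by blast
  have "Comp C f g = Comp C h (Comp C k g)"
    using f_eq cat_comp_assoc[OF g k h] by simp
  then show ?thesis
    unfolding zero_arr_def using Z cat_comp_hom[OF g k] h cat_comp_hom[OF g f(2)]
    by (auto simp: hom_def)
qed

lemma zero_arr_ex:
  assumes "zero_obj C Z" and "X \<in> Obj C" and "Y \<in> Obj C"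
  obtains z where "z \<in> hom C X Y" and "zero_arr C z"
proof -
  obtain g h where g: "g \<in> hom C X Z" and h: "h \<in> hom C Z Y"
    using zero_obj_hom_ex assms by metis
  then show ?thesis
    using that cat_comp_hom[OF g h] assms(1) unfolding zero_arr_def by (auto simp: hom_def)
qed

lemma zero_obj_isomorphic:
  assumes Z: "zero_obj C Z" and Z': "zero_obj C Z'"
  shows "isomorphic C Z Z'"
proof -
  note obj = zero_obj_obj[OF Z] zero_obj_obj[OF Z']
  obtain f g where f: "f \<in> hom C Z Z'" and g: "g \<in> hom C Z' Z"
    using zero_obj_hom_ex[OF Z obj(2)] by metis
  have "Comp C g f = Idm C Z"
    using zero_obj_hom_unique(1)[OF Z obj(1) cat_comp_hom[OF f g] cat_idm_hom[OF obj(1)]] .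
  moreover have "Comp C f g = Idm C Z'"
    using zero_obj_hom_unique(1)[OF Z' obj(2) cat_comp_hom[OF g f] cat_idm_hom[OF obj(2)]] .
  ultimately show ?thesis
    unfolding isomorphic_def is_iso_def using f g by (auto simp: hom_def)
qed

lemma kernel_of_product_projection:
  assumes pr: "is_product C X Y P p1 p2"
    and i: "i \<in> hom C X P" and p1i: "Comp C p1 i = Idm C X" and p2i: "zero_arr C (Comp C p2 i)"
  shows "is_kernel C i p2"
  unfolding is_kernel_def
proof (intro conjI ballI impI)
  have p1: "p1 \<in> hom C P X" and p2: "p2 \<in> hom C P Y"
    using pr unfolding is_product_def by blast+
  show "i \<in> Arr C" "p2 \<in> Arr C" "Cod C i = Dom C p2" "zero_arr C (Comp C p2 i)"
    using i p2 p2i by (auto simp: hom_def)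
  fix g assume g: "g \<in> Arr C" and "Cod C g = Dom C p2 \<and> zero_arr C (Comp C p2 g)"
  then have gP: "g \<in> hom C (Dom C g) P" and p2g: "zero_arr C (Comp C p2 g)"
    using p2 by (auto simp: hom_def)
  have W: "Dom C g \<in> Obj C"
    using cat_dom_cod_obj[OF g] by blast
  define u where "u = Comp C p1 g"
  have u: "u \<in> hom C (Dom C g) X"
    unfolding u_def using cat_comp_hom[OF gP p1] .
  have iu: "Comp C i u \<in> hom C (Dom C g) P"
    using cat_comp_hom[OF u i] .
  have e1: "Comp C p1 (Comp C i u) = Comp C p1 g"
    using cat_comp_assoc[OF u i p1] p1i cat_idm_left[OF u] by (simp add: u_def)
  have e2: "Comp C p2 (Comp C i u) = Comp C p2 g"
  proof -
    note p2i_hom = cat_comp_hom[OF i p2]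
    have "Comp C p2 (Comp C i u) = Comp C (Comp C p2 i) u"
      using cat_comp_assoc[OF u i p2] .
    also have "\<dots> = Comp C p2 g"
      using zero_arr_unique[OF zero_arr_comp_right[OF p2i p2i_hom u] cat_comp_hom[OF u p2i_hom]
          p2g cat_comp_hom[OF gP p2]] .
    finally show ?thesis .
  qed
  have "\<exists>!w. w \<in> hom C (Dom C g) P \<and> Comp C p1 w = Comp C p1 g \<and> Comp C p2 w = Comp C p2 g"
    using pr W cat_comp_hom[OF gP p1] cat_comp_hom[OF gP p2]
    unfolding is_product_def by blast
  then have iu_g: "Comp C i u = g"
    using iu gP e1 e2 by (elim ex1E) blast
  have u_unique: "v = u" if v: "v \<in> hom C (Dom C g) X" and "Comp C i v = g" for v
  proof -
    have "v = Comp C (Comp C p1 i) v"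
      using p1i cat_idm_left[OF v] by simp
    also have "\<dots> = u"
      using cat_comp_assoc[OF v i p1] that(2) by (simp add: u_def)
    finally show ?thesis .
  qed
  have "Dom C i = X"
    using i by (simp add: hom_def)
  then show "\<exists>!u. u \<in> hom C (Dom C g) (Dom C i) \<and> Comp C i u = g"
    using u iu_g u_unique by blast
qed

lemma split_epi_is_epi:
  assumes p: "p \<in> hom C X Y" and s: "s \<in> hom C Y X" and ps: "Comp C p s = Idm C Y"
  shows "is_epi C p"
  unfolding is_epi_def
proof (intro conjI ballI impI)
  show "p \<in> Arr C" using p by (simp add: hom_def)
  fix g h assume g: "g \<in> Arr C" and h: "h \<in> Arr C"
    and gh: "Dom C g = Cod C p \<and> Dom C h = Cod C p \<and> Cod C g = Cod C h \<and> Comp C g p = Comp C h p"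
  have "g \<in> hom C Y (Cod C g)" "h \<in> hom C Y (Cod C g)"
    using g h gh p by (auto simp: hom_def)
  then have "g = Comp C (Comp C g p) s" and "h = Comp C (Comp C h p) s"
    using cat_comp_assoc[OF s p] cat_idm_right ps by simp_all
  then show "g = h"
    using gh by simp
qed

lemma cokernel_of_kernel:
  assumes k: "is_kernel C k e" and c: "is_cokernel C e h"
  shows "is_cokernel C e k"
  unfolding is_cokernel_def
proof (intro conjI ballI impI)
  show "e \<in> Arr C" "k \<in> Arr C" "Dom C e = Cod C k" "zero_arr C (Comp C e k)"
    using k unfolding is_kernel_def by auto
  fix g assume g: "g \<in> Arr C" and gk: "Dom C g = Cod C k \<and> zero_arr C (Comp C g k)"
  have h: "h \<in> Arr C" "Cod C h = Dom C e" "zero_arr C (Comp C e h)"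
    using c unfolding is_cokernel_def by auto
  obtain v where v: "v \<in> hom C (Dom C h) (Dom C k)" "Comp C k v = h"
    using k h unfolding is_kernel_def by metis
  have kh: "k \<in> hom C (Dom C k) (Cod C k)" and gh: "g \<in> hom C (Cod C k) (Cod C g)"
    using k g gk unfolding is_kernel_def hom_def by auto
  have "Comp C g h = Comp C (Comp C g k) v"
    using cat_comp_assoc[OF v(1) kh gh] v(2) by simp
  moreover have "zero_arr C (Comp C (Comp C g k) v)"
    using zero_arr_comp_right[OF _ cat_comp_hom[OF kh gh] v(1)] gk by blast
  ultimately have "zero_arr C (Comp C g h)" by simp
  moreover have "Dom C g = Cod C h"
    using gk h(2) k unfolding is_kernel_def by simp
  ultimately show "\<exists>!u. u \<in> hom C (Cod C e) (Cod C g) \<and> Comp C u e = g"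
    using c g unfolding is_cokernel_def by blast
qed

end

lemma product_short_exact:
  assumes ab: "abelian C" and pr: "is_product C X Y P p1 p2"
  shows "short_exact C X P Y"
proof -
  have cat: "is_category C" and Z: "\<exists>Z. zero_obj C Z"
    and epi_coker: "\<And>f. is_epi C f \<Longrightarrow> \<exists>g. is_cokernel C f g"
    using ab unfolding abelian_def by blast+
  have p1: "p1 \<in> hom C P X" and p2: "p2 \<in> hom C P Y"
    and univ: "\<And>W f g. W \<in> Obj C \<Longrightarrow> f \<in> hom C W X \<Longrightarrow> g \<in> hom C W Y \<Longrightarrow>
        \<exists>u. u \<in> hom C W P \<and> Comp C p1 u = f \<and> Comp C p2 u = g"
    using pr unfolding is_product_def by blast+
  have X: "X \<in> Obj C" and Y: "Y \<in> Obj C"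
    using p1 p2 cat_dom_cod_obj[OF cat] unfolding hom_def by auto
  obtain zXY where zXY: "zXY \<in> hom C X Y" "zero_arr C zXY"
    using zero_arr_ex[OF cat _ X Y] Z by metis
  obtain zYX where zYX: "zYX \<in> hom C Y X"
    using zero_arr_ex[OF cat _ Y X] Z by metis
  obtain i where i: "i \<in> hom C X P" "Comp C p1 i = Idm C X" "Comp C p2 i = zXY"
    using univ[OF X cat_idm_hom[OF cat X] zXY(1)] by blast
  obtain s where s: "s \<in> hom C Y P" "Comp C p2 s = Idm C Y"
    using univ[OF Y zYX cat_idm_hom[OF cat Y]] by blast
  have ker: "is_kernel C i p2"
    using kernel_of_product_projection[OF cat pr i(1,2)] i(3) zXY(2) by simp
  obtain h where "is_cokernel C p2 h"
    using epi_coker split_epi_is_epi[OF cat p2 s] by blast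
  then have "is_cokernel C p2 i"
    using cokernel_of_kernel[OF cat ker] by blast
  then show ?thesis
    unfolding short_exact_def using i(1) p2 ker by blast
qed

section \<open>The Grothendieck monoid\<close>

lemma groth_rel_carrier: "groth_rel C E A B \<Longrightarrow> set_mset A \<subseteq> E \<and> set_mset B \<subseteq> E"
  by (induction rule: groth_rel.induct) (auto simp: conflation_def)

lemma groth_rel_add:
  assumes A: "groth_rel C E A A'" and B: "groth_rel C E B B'"
  shows "groth_rel C E (A + B) (A' + B')"
proof -
  have "groth_rel C E (A + B) (A' + B)"
    using gr_add[OF A] groth_rel_carrier[OF B] by blast
  moreover have "groth_rel C E (B + A') (B' + A')"
    using gr_add[OF B] groth_rel_carrier[OF A] by blast
  ultimately show ?thesis
    using gr_trans by (simp add: add.commute)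
qed

lemma groth_class_eq_iff:
  assumes "set_mset A \<subseteq> E"
  shows "groth_class C E A = groth_class C E B \<longleftrightarrow> groth_rel C E A B"
proof
  assume "groth_class C E A = groth_class C E B"
  then have "groth_rel C E B A"
    using gr_refl[OF assms] unfolding groth_class_def by blast
  then show "groth_rel C E A B"
    by (rule gr_sym)
qed (auto simp: groth_class_def intro: gr_sym gr_trans)

lemma GM_add_groth_class:
  assumes "set_mset A \<subseteq> E" and "set_mset B \<subseteq> E"
  shows "GM_add C E (groth_class C E A) (groth_class C E B) = groth_class C E (A + B)"
  unfolding GM_add_def groth_class_def
  using gr_refl[OF assms(1)] gr_refl[OF assms(2)] groth_rel_add gr_trans by blast

lemma groth_class_in_GM: "set_mset A \<subseteq> E \<Longrightarrow> groth_class C E A \<in> GM C E"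
  unfolding GM_def by blast

lemma GM_cases:
  "c \<in> GM C E \<Longrightarrow> (\<And>A. set_mset A \<subseteq> E \<Longrightarrow> c = groth_class C E A \<Longrightarrow> P) \<Longrightarrow> P"
  unfolding GM_def by blast

lemma GM_add_closed: "a \<in> GM C E \<Longrightarrow> b \<in> GM C E \<Longrightarrow> GM_add C E a b \<in> GM C E"
  by (elim GM_cases) (simp add: GM_add_groth_class groth_class_in_GM)

lemma GM_add_commute: "a \<in> GM C E \<Longrightarrow> b \<in> GM C E \<Longrightarrow> GM_add C E a b = GM_add C E b a"
  by (elim GM_cases) (simp add: GM_add_groth_class add.commute)

lemma GM_add_zero_left: "b \<in> GM C E \<Longrightarrow> GM_add C E (groth_class C E {#}) b = b"
  by (elim GM_cases) (simp add: GM_add_groth_class)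

lemma gcls_in_GM: "X \<in> E \<Longrightarrow> gcls C E X \<in> GM C E"
  unfolding gcls_def by (simp add: groth_class_in_GM)

lemma gcls_isomorphic: "X \<in> E \<Longrightarrow> Y \<in> E \<Longrightarrow> isomorphic C X Y \<Longrightarrow> gcls C E X = gcls C E Y"
  unfolding gcls_def by (simp add: groth_class_eq_iff gr_iso)

lemma gcls_zero_obj: "Z \<in> E \<Longrightarrow> zero_obj C Z \<Longrightarrow> gcls C E Z = groth_class C E {#}"
  unfolding gcls_def by (simp add: groth_class_eq_iff gr_zero)

lemma gcls_conflation:
  assumes "conflation C E X Y Z"
  shows "gcls C E Y = GM_add C E (gcls C E X) (gcls C E Z)"
proof -
  have E: "X \<in> E" "Y \<in> E" "Z \<in> E"
    using assms unfolding conflation_def by simp_all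
  have "groth_rel C E {#Y#} ({#X#} + {#Z#})"
    using gr_conf[OF assms] by (simp add: add_mset_commute)
  then show ?thesis
    unfolding gcls_def using E by (simp add: groth_class_eq_iff GM_add_groth_class)
qed

lemma product_groth_rel:
  assumes "abelian C" and "X \<in> E" "Y \<in> E" "P \<in> E" and "is_product C X Y P p1 p2"
  shows "groth_rel C E {#P#} {#X, Y#}"
  using assms product_short_exact by (metis conflation_def gr_conf)

section \<open>Serre subcategories and prime ideals\<close>

lemma serreD:
  assumes "serre C E S"
  shows serre_subset: "S \<subseteq> E"
    and serre_isomorphic: "X \<in> S \<Longrightarrow> Y \<in> E \<Longrightarrow> isomorphic C X Y \<Longrightarrow> Y \<in> S"
    and serre_has_zero_obj: "\<exists>Z\<in>S. zero_obj C Z"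
    and serre_product: "X \<in> S \<Longrightarrow> Y \<in> S \<Longrightarrow> P \<in> E \<Longrightarrow> is_product C X Y P p1 p2 \<Longrightarrow> P \<in> S"
    and serre_conflation: "conflation C E X Y Z \<Longrightarrow> Y \<in> S \<longleftrightarrow> X \<in> S \<and> Z \<in> S"
  using assms unfolding serre_def by blast+

lemma serre_zero_obj:
  assumes "is_category C" and S: "serre C E S" and "Z \<in> E" "zero_obj C Z"
  shows "Z \<in> S"
proof -
  obtain Z' where "Z' \<in> S" "zero_obj C Z'"
    using serre_has_zero_obj[OF S] by blast
  then show ?thesis
    using serre_isomorphic[OF S] zero_obj_isomorphic[OF assms(1)] assms(3,4) by blast
qed

lemma serre_groth_rel_invariant:
  assumes "is_category C" and S: "serre C E S" and "groth_rel C E A B"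
  shows "set_mset A \<subseteq> S \<longleftrightarrow> set_mset B \<subseteq> S"
  using assms(3)
proof (induction rule: groth_rel.induct)
  case (gr_iso X Y)
  then have "X \<in> S \<longleftrightarrow> Y \<in> S"
    using serre_isomorphic[OF S] isomorphic_sym[OF gr_iso(3)] by blast
  then show ?case
    by simp
next
  case (gr_zero Z)
  then show ?case
    using serre_zero_obj[OF assms(1) S] by simp
next
  case (gr_conf X Y Z)
  then show ?case
    using serre_conflation[OF S] by simp
qed auto

lemma groth_rel_single_object:
  assumes T: "T \<subseteq> E" and zero: "\<exists>Z\<in>T. zero_obj C Z"
    and sum: "\<And>X Y. X \<in> T \<Longrightarrow> Y \<in> T \<Longrightarrow> \<exists>P\<in>T. groth_rel C E {#P#} {#X, Y#}"
  shows "set_mset A \<subseteq> T \<Longrightarrow> \<exists>X\<in>T. groth_rel C E {#X#} A"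
proof (induction A)
  case empty
  obtain Z where "Z \<in> T" "zero_obj C Z"
    using zero by blast
  then show ?case
    using gr_zero[of Z E C] T by blast
next
  case (add Y A)
  then obtain X where X: "X \<in> T" "groth_rel C E {#X#} A" and Y: "Y \<in> T"
    by auto
  obtain P where P: "P \<in> T" "groth_rel C E {#P#} {#X, Y#}"
    using sum[OF X(1) Y] by blast
  have "set_mset {#Y#} \<subseteq> E"
    using Y T by auto
  then have "groth_rel C E ({#X#} + {#Y#}) (A + {#Y#})"
    by (rule gr_add[OF X(2)])
  then have "groth_rel C E {#X, Y#} (add_mset Y A)"
    by (simp add: add_mset_commute)
  then have "groth_rel C E {#P#} (add_mset Y A)"
    using gr_trans[OF P(2)] by blast
  then show ?case
    using P(1) by blast
qed

lemma prime_ideal_add_iff: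
  assumes p: "prime_ideal M add p"
    and comm: "\<And>a b. a \<in> M \<Longrightarrow> b \<in> M \<Longrightarrow> add a b = add b a"
    and x: "x \<in> M" and y: "y \<in> M"
  shows "add x y \<in> p \<longleftrightarrow> x \<in> p \<or> y \<in> p"
proof
  assume "add x y \<in> p"
  then show "x \<in> p \<or> y \<in> p"
    using p x y unfolding prime_ideal_def by blast
next
  have ideal: "\<And>u a. u \<in> p \<Longrightarrow> a \<in> M \<Longrightarrow> add u a \<in> p"
    using p unfolding prime_ideal_def by blast
  assume "x \<in> p \<or> y \<in> p"
  then show "add x y \<in> p"
    using ideal[of x y] ideal[of y x] comm[OF x y] x y by auto
qed

lemma prime_ideal_zero_notin:
  assumes p: "prime_ideal M add p" and z: "z \<in> M" and zero: "\<And>b. b \<in> M \<Longrightarrow> add z b = b"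
  shows "z \<notin> p"
proof
  assume "z \<in> p"
  then have "add z b \<in> p" if "b \<in> M" for b
    using p that unfolding prime_ideal_def by blast
  then have "M \<subseteq> p"
    using zero by auto
  then show False
    using p unfolding prime_ideal_def by blast
qed

definition Serre_of_prime :: "('o,'a) cat \<Rightarrow> 'o set \<Rightarrow> 'o multiset set set \<Rightarrow> 'o set" where
  "Serre_of_prime C E p = {X \<in> E. gcls C E X \<notin> p}"

context
  fixes C :: "('o,'a) cat" and E :: "'o set"
  assumes exact: "exact_cat C E"
begin

lemma exact_cat_abelian: "abelian C"
  and exact_cat_category: "is_category C"
  and exact_cat_zero_obj: "\<exists>Z\<in>E. zero_obj C Z"
  and exact_cat_product: "X \<in> E \<Longrightarrow> Y \<in> E \<Longrightarrow> \<exists>P\<in>E. \<exists>p1 p2. is_product C X Y P p1 p2"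
  using exact unfolding exact_cat_def abelian_def by blast+

lemma serre_groth_rel_single_object:
  assumes S: "serre C E S" and A: "set_mset A \<subseteq> S"
  shows "\<exists>X\<in>S. groth_rel C E {#X#} A"
proof (rule groth_rel_single_object[OF serre_subset[OF S] serre_has_zero_obj[OF S] _ A])
  fix X Y assume "X \<in> S" "Y \<in> S"
  moreover obtain P p1 p2 where "P \<in> E" "is_product C X Y P p1 p2"
    using exact_cat_product calculation serre_subset[OF S] by blast
  ultimately show "\<exists>P\<in>S. groth_rel C E {#P#} {#X, Y#}"
    using serre_product[OF S] product_groth_rel[OF exact_cat_abelian] serre_subset[OF S] by blast
qed

lemma GM_eq_gcls_image: "GM C E = gcls C E ` E"
proof (intro equalityI subsetI)
  fix c assume "c \<in> GM C E"
  then obtain A where A: "set_mset A \<subseteq> E" "c = groth_class C E A"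
    by (rule GM_cases)
  obtain X where "X \<in> E" "groth_rel C E {#X#} A"
    using groth_rel_single_object[OF order_refl exact_cat_zero_obj _ A(1)]
      exact_cat_product product_groth_rel[OF exact_cat_abelian] by metis
  then show "c \<in> gcls C E ` E"
    unfolding gcls_def using A groth_class_eq_iff[of "{#X#}" E C A] by auto
qed (auto simp: gcls_in_GM)

lemma groth_class_in_gcls_image_iff:
  assumes S: "serre C E S" and A: "set_mset A \<subseteq> E"
  shows "groth_class C E A \<in> gcls C E ` S \<longleftrightarrow> set_mset A \<subseteq> S"
proof
  assume "groth_class C E A \<in> gcls C E ` S"
  then obtain X where "X \<in> S" "groth_rel C E A {#X#}"
    unfolding gcls_def using A groth_class_eq_iff by blast
  then show "set_mset A \<subseteq> S"
    using serre_groth_rel_invariant[OF exact_cat_category S] by auto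
next
  assume "set_mset A \<subseteq> S"
  then obtain X where "X \<in> S" "groth_rel C E {#X#} A"
    using serre_groth_rel_single_object[OF S] by blast
  then show "groth_class C E A \<in> gcls C E ` S"
    unfolding gcls_def using serre_subset[OF S] groth_class_eq_iff[of "{#X#}" E C A] by force
qed

lemma gcls_in_gcls_image_iff: "serre C E S \<Longrightarrow> X \<in> E \<Longrightarrow> gcls C E X \<in> gcls C E ` S \<longleftrightarrow> X \<in> S"
  using groth_class_in_gcls_image_iff[of S "{#X#}"] unfolding gcls_def by simp


lemma groth_class_in_Phi_iff:
  assumes "serre C E S" and "set_mset A \<subseteq> E"
  shows "groth_class C E A \<in> Phi C E S \<longleftrightarrow> \<not> set_mset A \<subseteq> S"
  unfolding Phi_def using groth_class_in_gcls_image_iff[OF assms] groth_class_in_GM[OF assms(2)]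
  by blast

lemma Phi_prime_ideal:
  assumes S: "serre C E S"
  shows "prime_ideal (GM C E) (GM_add C E) (Phi C E S)"
  unfolding prime_ideal_def
proof (intro conjI ballI impI)
  show "Phi C E S \<subseteq> GM C E"
    unfolding Phi_def by blast
  show "Phi C E S \<noteq> GM C E"
    using groth_class_in_Phi_iff[OF S, of "{#}"] groth_class_in_GM[of "{#}"] by auto
next
  fix x a assume "x \<in> Phi C E S" and "a \<in> GM C E"
  moreover have "x \<in> GM C E"
    using calculation unfolding Phi_def by blast
  ultimately show "GM_add C E x a \<in> Phi C E S"
    by (elim GM_cases) (auto simp: GM_add_groth_class groth_class_in_Phi_iff[OF S])
next
  fix x y assume "x \<in> GM C E" "y \<in> GM C E" and "GM_add C E x y \<in> Phi C E S"
  then show "x \<in> Phi C E S \<or> y \<in> Phi C E S"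
    by (elim GM_cases) (auto simp: GM_add_groth_class groth_class_in_Phi_iff[OF S])
qed

lemma inj_on_Phi: "inj_on (Phi C E) (Serre C E)"
proof
  fix S T assume S: "S \<in> Serre C E" and T: "T \<in> Serre C E" and eq: "Phi C E S = Phi C E T"
  have "X \<in> S \<longleftrightarrow> X \<in> T" if "X \<in> E" for X
    using eq gcls_in_GM[OF that] gcls_in_gcls_image_iff[OF _ that] S T
    unfolding Phi_def Serre_def by blast
  then show "S = T"
    using S T serre_subset unfolding Serre_def by blast
qed


lemma serre_Serre_of_prime:
  assumes p: "prime_ideal (GM C E) (GM_add C E) p"
  shows "serre C E (Serre_of_prime C E p)"
proof -
  have add_iff: "GM_add C E (gcls C E X) (gcls C E Y) \<in> p \<longleftrightarrow> gcls C E X \<in> p \<or> gcls C E Y \<in> p"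
    if "X \<in> E" "Y \<in> E" for X Y
    using prime_ideal_add_iff[OF p _ gcls_in_GM gcls_in_GM] GM_add_commute that by blast
  have zero: "groth_class C E {#} \<notin> p"
    using prime_ideal_zero_notin[OF p groth_class_in_GM GM_add_zero_left] by simp
  have conf: "Y \<in> Serre_of_prime C E p \<longleftrightarrow> X \<in> Serre_of_prime C E p \<and> Z \<in> Serre_of_prime C E p"
    if c: "conflation C E X Y Z" for X Y Z
  proof -
    have "X \<in> E" "Y \<in> E" "Z \<in> E"
      using c unfolding conflation_def by simp_all
    then show ?thesis
      unfolding Serre_of_prime_def using gcls_conflation[OF c] add_iff by simp
  qed
  show ?thesis
    unfolding serre_def
  proof (intro conjI ballI impI allI)
    show "Serre_of_prime C E p \<subseteq> E"
      unfolding Serre_of_prime_def by blast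
  next
    fix X Y assume X: "X \<in> Serre_of_prime C E p" and Y: "Y \<in> E" and iso: "isomorphic C X Y"
    have "gcls C E X = gcls C E Y"
      using X gcls_isomorphic[OF _ Y iso] unfolding Serre_of_prime_def by simp
    then show "Y \<in> Serre_of_prime C E p"
      using X Y unfolding Serre_of_prime_def by simp
  next
    obtain Z where Z: "Z \<in> E" "zero_obj C Z"
      using exact_cat_zero_obj by blast
    then have "Z \<in> Serre_of_prime C E p"
      unfolding Serre_of_prime_def using gcls_zero_obj[OF Z] zero by simp
    then show "\<exists>Z\<in>Serre_of_prime C E p. zero_obj C Z"
      using Z by blast
  next
    fix X Y P assume X: "X \<in> Serre_of_prime C E p" and Y: "Y \<in> Serre_of_prime C E p"
      and P: "P \<in> E" and "\<exists>p1 p2. is_product C X Y P p1 p2"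
    then obtain p1 p2 where "is_product C X Y P p1 p2"
      by blast
    then have "conflation C E X P Y"
      using X Y P product_short_exact[OF exact_cat_abelian]
      unfolding conflation_def Serre_of_prime_def by simp
    then show "P \<in> Serre_of_prime C E p"
      using X Y conf by blast
  next
    fix X Y Z
    show "conflation C E X Y Z \<Longrightarrow>
        Y \<in> Serre_of_prime C E p \<longleftrightarrow> X \<in> Serre_of_prime C E p \<and> Z \<in> Serre_of_prime C E p"
      by (rule conf)
  qed
qed

lemma Phi_Serre_of_prime:
  assumes p: "prime_ideal (GM C E) (GM_add C E) p"
  shows "Phi C E (Serre_of_prime C E p) = p"
proof -
  have "p \<subseteq> GM C E"
    using p unfolding prime_ideal_def by blast
  then show ?thesis
    unfolding Phi_def Serre_of_prime_def GM_eq_gcls_image by auto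
qed

lemma bij_betw_Phi: "bij_betw (Phi C E) (Serre C E) (MSpec (GM C E) (GM_add C E))"
proof (rule bij_betw_imageI[OF inj_on_Phi], intro equalityI subsetI)
  fix q assume "q \<in> Phi C E ` Serre C E"
  then show "q \<in> MSpec (GM C E) (GM_add C E)"
    using Phi_prime_ideal unfolding Serre_def MSpec_def by blast
next
  fix q assume "q \<in> MSpec (GM C E) (GM_add C E)"
  then have "prime_ideal (GM C E) (GM_add C E) q"
    unfolding MSpec_def by simp
  then show "q \<in> Phi C E ` Serre C E"
    using serre_Serre_of_prime Phi_Serre_of_prime unfolding Serre_def by (metis image_eqI mem_Collect_eq)
qed

end

section \<open>Zariski topologies\<close>

lemma MSpec_diff_mspec_V_Int:
  assumes comm: "\<And>a b. a \<in> M \<Longrightarrow> b \<in> M \<Longrightarrow> add a b = add b a"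
    and S: "S \<subseteq> M" and T: "T \<subseteq> M"
  shows "(MSpec M add - mspec_V M add S) \<inter> (MSpec M add - mspec_V M add T) =
         MSpec M add - mspec_V M add {add a b |a b. a \<in> S \<and> b \<in> T}"
proof -
  have "{add a b |a b. a \<in> S \<and> b \<in> T} \<subseteq> p \<longleftrightarrow> S \<subseteq> p \<or> T \<subseteq> p"
    if p: "prime_ideal M add p" for p
  proof -
    have "add a b \<in> p \<longleftrightarrow> a \<in> p \<or> b \<in> p" if "a \<in> S" "b \<in> T" for a b
      using prime_ideal_add_iff[of M add p a b, OF p comm] that S T by blast
    then have "{add a b |a b. a \<in> S \<and> b \<in> T} \<subseteq> p \<longleftrightarrow> (\<forall>a\<in>S. \<forall>b\<in>T. a \<in> p \<or> b \<in> p)"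
      by blast
    also have "\<dots> \<longleftrightarrow> S \<subseteq> p \<or> T \<subseteq> p"
      by blast
    finally show ?thesis .
  qed
  then show ?thesis
    unfolding mspec_V_def MSpec_def by blast
qed

lemma MSpec_diff_mspec_V_Union:
  "\<Union>((\<lambda>S. MSpec M add - mspec_V M add S) ` F) = MSpec M add - mspec_V M add (\<Union>F)"
  unfolding mspec_V_def by blast

lemma istopology_MSpec_opens:
  assumes comm: "\<And>a b. a \<in> M \<Longrightarrow> b \<in> M \<Longrightarrow> add a b = add b a"
    and closed: "\<And>a b. a \<in> M \<Longrightarrow> b \<in> M \<Longrightarrow> add a b \<in> M"
  shows "istopology (\<lambda>U. \<exists>S \<subseteq> M. U = MSpec M add - mspec_V M add S)"
  unfolding istopology_def
proof (intro conjI allI impI ballI)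
  fix U V assume "\<exists>S \<subseteq> M. U = MSpec M add - mspec_V M add S" "\<exists>T \<subseteq> M. V = MSpec M add - mspec_V M add T"
  then obtain S T where S: "S \<subseteq> M" "U = MSpec M add - mspec_V M add S"
    and T: "T \<subseteq> M" "V = MSpec M add - mspec_V M add T"
    by blast
  define R where "R = {add a b |a b. a \<in> S \<and> b \<in> T}"
  have "R \<subseteq> M"
    unfolding R_def using S T closed by blast
  moreover have "U \<inter> V = MSpec M add - mspec_V M add R"
    unfolding R_def S(2) T(2) by (rule MSpec_diff_mspec_V_Int[of M add, OF comm S(1) T(1)])
  ultimately show "\<exists>R \<subseteq> M. U \<inter> V = MSpec M add - mspec_V M add R"
    by blast
next
  fix K assume K: "\<forall>U\<in>K. \<exists>S \<subseteq> M. U = MSpec M add - mspec_V M add S"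
  define F where "F = {S. S \<subseteq> M \<and> MSpec M add - mspec_V M add S \<in> K}"
  have "K = (\<lambda>S. MSpec M add - mspec_V M add S) ` F"
  proof (intro equalityI subsetI)
    fix U assume "U \<in> K"
    then obtain S where "S \<subseteq> M" "U = MSpec M add - mspec_V M add S"
      using K by blast
    then show "U \<in> (\<lambda>S. MSpec M add - mspec_V M add S) ` F"
      unfolding F_def using \<open>U \<in> K\<close> by (intro rev_image_eqI) auto
  qed (auto simp: F_def)
  moreover have "\<Union>F \<subseteq> M"
    unfolding F_def by blast
  ultimately show "\<exists>S \<subseteq> M. \<Union>K = MSpec M add - mspec_V M add S"
    using MSpec_diff_mspec_V_Union by metis
qed

lemma openin_mspec_zariski:
  assumes "\<And>a b. a \<in> M \<Longrightarrow> b \<in> M \<Longrightarrow> add a b = add b a"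
    and "\<And>a b. a \<in> M \<Longrightarrow> b \<in> M \<Longrightarrow> add a b \<in> M"
  shows "openin (mspec_zariski M add) U \<longleftrightarrow> (\<exists>S \<subseteq> M. U = MSpec M add - mspec_V M add S)"
  unfolding mspec_zariski_def using istopology_MSpec_opens[of M add, OF assms] by simp

lemma topspace_mspec_zariski:
  assumes "\<And>a b. a \<in> M \<Longrightarrow> b \<in> M \<Longrightarrow> add a b = add b a"
    and "\<And>a b. a \<in> M \<Longrightarrow> b \<in> M \<Longrightarrow> add a b \<in> M"
  shows "topspace (mspec_zariski M add) = MSpec M add"
proof -
  have "MSpec M add - mspec_V M add M = MSpec M add"
    unfolding mspec_V_def MSpec_def prime_ideal_def by blast
  then have "openin (mspec_zariski M add) (MSpec M add)"
    using openin_mspec_zariski[of M add, OF assms] by blast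
  then show ?thesis
    using openin_subset openin_mspec_zariski[of M add, OF assms] unfolding topspace_def by blast
qed

lemma homeomorphic_map_pullback_topology:
  assumes bij: "bij_betw f A (topspace T)"
  shows "homeomorphic_map (pullback_topology A f T) T f"
proof -
  have inj: "inj_on f A" and img: "f ` A = topspace T"
    using bij by (auto simp: bij_betw_def)
  have top: "topspace (pullback_topology A f T) = A"
    using img unfolding topspace_pullback_topology by blast
  have "openin (pullback_topology A f T) {x \<in> A. f x \<in> U} \<longleftrightarrow> openin T U"
    if U: "U \<subseteq> topspace T" for U
  proof
    assume "openin (pullback_topology A f T) {x \<in> A. f x \<in> U}"
    then obtain V where V: "openin T V" "{x \<in> A. f x \<in> U} = f -` V \<inter> A"
      unfolding openin_pullback_topology by blast
    have "U = f ` {x \<in> A. f x \<in> U}"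
      using U img by fastforce
    also have "\<dots> = f ` (f -` V \<inter> A)"
      using V(2) by simp
    also have "\<dots> = V"
      using openin_subset[OF V(1)] img by fastforce
    finally show "openin T U"
      using V(1) by simp
  next
    assume "openin T U"
    moreover have "{x \<in> A. f x \<in> U} = f -` U \<inter> A"
      by blast
    ultimately show "openin (pullback_topology A f T) {x \<in> A. f x \<in> U}"
      unfolding openin_pullback_topology by blast
  qed
  then show ?thesis
    unfolding homeomorphic_map_def quotient_map_def top using img inj by blast
qed

lemma openin_mspec_zariski_GM:
  "openin (mspec_zariski (GM C E) (GM_add C E)) U \<longleftrightarrow>
   (\<exists>S \<subseteq> GM C E. U = MSpec (GM C E) (GM_add C E) - mspec_V (GM C E) (GM_add C E) S)"
  by (intro openin_mspec_zariski GM_add_commute GM_add_closed)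

lemma topspace_mspec_zariski_GM:
  "topspace (mspec_zariski (GM C E) (GM_add C E)) = MSpec (GM C E) (GM_add C E)"
  by (intro topspace_mspec_zariski GM_add_commute GM_add_closed)

context
  fixes C :: "('o,'a) cat" and E :: "'o set"
  assumes exact: "exact_cat C E"
begin

lemma gcls_image_subset_Phi_iff:
  assumes T: "serre C E T" and X: "X \<subseteq> E"
  shows "gcls C E ` X \<subseteq> Phi C E T \<longleftrightarrow> T \<inter> X = {}"
proof -
  have "gcls C E ` X \<subseteq> GM C E"
    using X by (auto intro: gcls_in_GM)
  then have "gcls C E ` X \<subseteq> Phi C E T \<longleftrightarrow> (\<forall>x\<in>X. gcls C E x \<notin> gcls C E ` T)"
    unfolding Phi_def by blast
  also have "\<dots> \<longleftrightarrow> (\<forall>x\<in>X. x \<notin> T)"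
    using gcls_in_gcls_image_iff[OF exact T] X by (meson subsetD)
  finally show ?thesis
    by blast
qed

lemma Phi_preimage_mspec_open:
  assumes X: "X \<subseteq> E"
  shows "Phi C E -` (MSpec (GM C E) (GM_add C E) - mspec_V (GM C E) (GM_add C E) (gcls C E ` X))
           \<inter> Serre C E = Serre C E - serre_V C E X"
proof (intro set_eqI)
  fix T
  show "T \<in> Phi C E -` (MSpec (GM C E) (GM_add C E) - mspec_V (GM C E) (GM_add C E) (gcls C E ` X))
           \<inter> Serre C E \<longleftrightarrow> T \<in> Serre C E - serre_V C E X"
  proof (cases "T \<in> Serre C E")
    case True
    then have "Phi C E T \<in> MSpec (GM C E) (GM_add C E)"
      using bij_betw_Phi[OF exact] by (auto simp: bij_betw_def)
    moreover have "serre C E T"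
      using True by (simp add: Serre_def)
    ultimately show ?thesis
      using True gcls_image_subset_Phi_iff[OF _ X] unfolding serre_V_def mspec_V_def by simp
  qed (simp add: serre_V_def)
qed

lemma serre_V_complement_Phi_preimage:
  assumes X: "X \<subseteq> E"
  shows "\<exists>V. openin (mspec_zariski (GM C E) (GM_add C E)) V \<and>
             Serre C E - serre_V C E X = Phi C E -` V \<inter> Serre C E"
proof (intro exI conjI)
  have "gcls C E ` X \<subseteq> GM C E"
    using X by (auto intro: gcls_in_GM)
  then show "openin (mspec_zariski (GM C E) (GM_add C E))
      (MSpec (GM C E) (GM_add C E) - mspec_V (GM C E) (GM_add C E) (gcls C E ` X))"
    unfolding openin_mspec_zariski_GM by blast
qed (simp add: Phi_preimage_mspec_open[OF X])

lemma Phi_preimage_open_iff: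
  "(\<exists>V. openin (mspec_zariski (GM C E) (GM_add C E)) V \<and> U = Phi C E -` V \<inter> Serre C E) \<longleftrightarrow>
   (\<exists>X. iso_closed C E X \<and> U = Serre C E - serre_V C E X)"
proof
  assume "\<exists>V. openin (mspec_zariski (GM C E) (GM_add C E)) V \<and> U = Phi C E -` V \<inter> Serre C E"
  then obtain S where S: "S \<subseteq> GM C E"
    and U: "U = Phi C E -` (MSpec (GM C E) (GM_add C E) - mspec_V (GM C E) (GM_add C E) S) \<inter> Serre C E"
    unfolding openin_mspec_zariski_GM by blast
  define X where "X = {x \<in> E. gcls C E x \<in> S}"
  have "S = gcls C E ` X" and "X \<subseteq> E"
    using S unfolding X_def GM_eq_gcls_image[OF exact] by blast+
  then have "U = Serre C E - serre_V C E X"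
    using U Phi_preimage_mspec_open by simp
  moreover have "iso_closed C E X"
    unfolding iso_closed_def X_def by (auto dest: gcls_isomorphic)
  ultimately show "\<exists>X. iso_closed C E X \<and> U = Serre C E - serre_V C E X"
    by blast
next
  assume "\<exists>X. iso_closed C E X \<and> U = Serre C E - serre_V C E X"
  then obtain X where "X \<subseteq> E" "U = Serre C E - serre_V C E X"
    unfolding iso_closed_def by blast
  then show "\<exists>V. openin (mspec_zariski (GM C E) (GM_add C E)) V \<and> U = Phi C E -` V \<inter> Serre C E"
    using serre_V_complement_Phi_preimage by simp
qed

lemma serre_zariski_eq_pullback:
  "serre_zariski C E = pullback_topology (Serre C E) (Phi C E) (mspec_zariski (GM C E) (GM_add C E))"
  unfolding serre_zariski_def pullback_topology_def by (simp only: Phi_preimage_open_iff)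

lemma openin_serre_zariski:
  "openin (serre_zariski C E) U \<longleftrightarrow> (\<exists>X \<subseteq> E. U = Serre C E - serre_V C E X)"
proof
  assume "openin (serre_zariski C E) U"
  then have "\<exists>X. iso_closed C E X \<and> U = Serre C E - serre_V C E X"
    unfolding serre_zariski_eq_pullback openin_pullback_topology
    by (intro Phi_preimage_open_iff[THEN iffD1]) blast
  then show "\<exists>X \<subseteq> E. U = Serre C E - serre_V C E X"
    unfolding iso_closed_def by blast
next
  assume "\<exists>X \<subseteq> E. U = Serre C E - serre_V C E X"
  then obtain X where "X \<subseteq> E" "U = Serre C E - serre_V C E X"
    by blast
  then show "openin (serre_zariski C E) U"
    unfolding serre_zariski_eq_pullback openin_pullback_topology
    using serre_V_complement_Phi_preimage by simp
qed

lemma topspace_serre_zariski: "topspace (serre_zariski C E) = Serre C E"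
  using bij_betw_Phi[OF exact]
  unfolding serre_zariski_eq_pullback topspace_pullback_topology topspace_mspec_zariski_GM bij_betw_def
  by blast

lemma homeomorphic_map_Phi:
  "homeomorphic_map (serre_zariski C E) (mspec_zariski (GM C E) (GM_add C E)) (Phi C E)"
  unfolding serre_zariski_eq_pullback
  by (rule homeomorphic_map_pullback_topology) (simp add: topspace_mspec_zariski_GM bij_betw_Phi[OF exact])

lemma U_obj_eq: "U_obj C E X = Serre C E - serre_V C E {X}"
  unfolding U_obj_def serre_V_def by blast

lemma openin_serre_zariski_basis:
  "openin (serre_zariski C E) = arbitrary union_of (\<lambda>V. \<exists>X\<in>E. V = U_obj C E X)"
  unfolding openin_topology_base_unique
proof (intro conjI allI impI)
  fix V assume "\<exists>X\<in>E. V = U_obj C E X"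
  then show "openin (serre_zariski C E) V"
    unfolding U_obj_eq openin_serre_zariski by blast
next
  fix U T assume "openin (serre_zariski C E) U \<and> T \<in> U"
  then obtain X where "X \<subseteq> E" "U = Serre C E - serre_V C E X" "T \<in> U"
    unfolding openin_serre_zariski by blast
  then show "\<exists>V. (\<exists>X\<in>E. V = U_obj C E X) \<and> T \<in> V \<and> V \<subseteq> U"
    unfolding U_obj_def serre_V_def by blast
qed

lemma serre_zariski_specialization:
  assumes S: "S \<in> Serre C E" and T: "T \<in> Serre C E"
  shows "S \<in> serre_zariski C E closure_of {T} \<longleftrightarrow> S \<subseteq> T"
proof
  assume S_T: "S \<in> serre_zariski C E closure_of {T}"
  show "S \<subseteq> T"
  proof
    fix X assume X: "X \<in> S"
    then have "X \<in> E"
      using S serre_subset[of C E S] unfolding Serre_def by blast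
    then have "openin (serre_zariski C E) (U_obj C E X)"
      unfolding U_obj_eq openin_serre_zariski by blast
    moreover have "S \<in> U_obj C E X"
      using S X unfolding U_obj_def by blast
    ultimately have "T \<in> U_obj C E X"
      using S_T unfolding in_closure_of by blast
    then show "X \<in> T"
      unfolding U_obj_def by blast
  qed
next
  assume S_T: "S \<subseteq> T"
  have "T \<in> U" if U: "openin (serre_zariski C E) U" and SU: "S \<in> U" for U
  proof -
    obtain X where "U = Serre C E - serre_V C E X"
      using U unfolding openin_serre_zariski by blast
    then show ?thesis
      using SU S_T T unfolding serre_V_def by blast
  qed
  then show "S \<in> serre_zariski C E closure_of {T}"
    unfolding in_closure_of topspace_serre_zariski using S by blast
qed

end

theorem mainTheorem15:
  fixes C :: "('o, 'a) cat" and E :: "'o set"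
  assumes "exact_cat C E"
  shows "homeomorphic_map (serre_zariski C E) (mspec_zariski (GM C E) (GM_add C E)) (Phi C E) \<and>
         openin (serre_zariski C E) = arbitrary union_of (\<lambda>V. \<exists>X\<in>E. V = U_obj C E X) \<and>
         (\<forall>S\<in>Serre C E. \<forall>T\<in>Serre C E.
           S \<in> serre_zariski C E closure_of {T} \<longleftrightarrow> S \<subseteq> T)"
  using homeomorphic_map_Phi[OF assms] openin_serre_zariski_basis[OF assms]
    serre_zariski_specialization[OF assms] by blast

end
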